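(* Let $m>a\geq0$, $n>b\geq0$ be integers. If there exists a regular erasure pattern $\mathcal{E}\subseteq[m]\times[n]$ that is not correctable in $T_{m\times n}(a,b,0)$, then for any non-negative integers $\delta,\gamma$ there exists a regular erasure pattern $\mathcal{E}'\subseteq[m+\delta]\times[n+\gamma]$ that is not correctable in $T_{(m+\delta)\times(n+\gamma)}(a+\delta,b+\gamma,0)$.
   Context: Positions of vectors in $\mathbb{F}^{mn}$ are identified with $[m]\times[n]$, $[k]=\{1,\dots,k\}$. For linear codes $\mathcal{C}_1\subseteq\mathbb{F}^m,\mathcal{C}_2\subseteq\mathbb{F}^n$, $\mathcal{C}_1\otimes\mathcal{C}_2$ is the row span of the Kronecker product of their generator matrices. A code for the topology $T_{m\times n}(a,b,0)$ is a linear code over a finite field $\mathbb{F}$ whose parity-check matrix is a parity-check matrix of $\mathcal{C}_{\mathsf{col}}\otimes\mathcal{C}_{\mathsf{row}}$, where $\mathcal{C}_{\mathsf{col}}$ is a linear $[m,\geq m-a]$ code and $\mathcal{C}_{\mathsf{row}}$ a linear $[n,\geq n-b]$ code over $\mathbb{F}$; $\mathbb{C}_{m\times n}(a,b,0)$ is the set of these codes (over any finite field). A code corrects an erasure pattern $\mathcal{E}$ if no two distinct codewords agree on all positions outside $\mathcal{E}$; $\mathcal{E}$ is correctable in $T_{m\times n}(a,b,0)$ if some code in $\mathbb{C}_{m\times n}(a,b,0)$ corrects it. An erasure pattern $\mathcal{E}\subseteq[m]\times[n]$ is regular (for $T_{m\times n}(a,b,0)$) if for all $\mathcal{U}\subseteq[m]$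 with $|\mathcal{U}|=u\geq a$ and all $\mathcal{V}\subseteq[n]$ with $|\mathcal{V}|=v\geq b$ one has $|\mathcal{E}\cap(\mathcal{U}\times\mathcal{V})|\leq va+ub-ab$. *)

theory Defs
  imports "HOL-Algebra.Ring" "HOL-Library.FuncSet"
begin

text \<open>Finite fields are represented as HOL-Algebra field structures whose carrier
is a (finite) set of natural numbers; every finite field is isomorphic to such a structure.\<close>

definition grid :: "nat \<Rightarrow> nat \<Rightarrow> (nat \<times> nat) set" where
  "grid m n = {1..m} \<times> {1..n}"

definition vecs :: "nat ring \<Rightarrow> 'p set \<Rightarrow> ('p \<Rightarrow> nat) set" where
  "vecs R P = (P \<rightarrow>\<^sub>E carrier R)"

definition lspan :: "nat ring \<Rightarrow> 'p set \<Rightarrow> ('p \<Rightarrow> nat) set \<Rightarrow> ('p \<Rightarrow> nat) set" where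
  "lspan R P S = {(\<lambda>p\<in>P. finsum R (\<lambda>v. c v \<otimes>\<^bsub>R\<^esub> v p) T) | T c.
                    finite T \<and> T \<subseteq> S \<and> c \<in> T \<rightarrow> carrier R}"

definition linear_code :: "nat ring \<Rightarrow> 'p set \<Rightarrow> ('p \<Rightarrow> nat) set \<Rightarrow> bool" where
  "linear_code R P C \<longleftrightarrow> C \<subseteq> vecs R P \<and> lspan R P C = C"

definition lin_indep :: "nat ring \<Rightarrow> 'p set \<Rightarrow> (nat \<Rightarrow> 'p \<Rightarrow> nat) \<Rightarrow> nat \<Rightarrow> bool" where
  "lin_indep R P vs k \<longleftrightarrow>
     (\<forall>c \<in> {..<k} \<rightarrow> carrier R.
        (\<forall>p\<in>P. finsum R (\<lambda>i. c i \<otimes>\<^bsub>R\<^esub> vs i p) {..<k} = \<zero>\<^bsub>R\<^esub>) \<longrightarrow> (\<forall>i<k. c i = \<zero>\<^bsub>R\<^esub>))"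

definition dim_ge :: "nat ring \<Rightarrow> 'p set \<Rightarrow> ('p \<Rightarrow> nat) set \<Rightarrow> nat \<Rightarrow> bool" where
  "dim_ge R P C k \<longleftrightarrow> (\<exists>vs. (\<forall>i<k. vs i \<in> C) \<and> lin_indep R P vs k)"

text \<open>Tensor product code C1 \<otimes> C2 (row span of the Kronecker product of generator
matrices = span of all outer products x \<otimes> y with x \<in> C1, y \<in> C2).\<close>
definition tensor_code :: "nat ring \<Rightarrow> nat \<Rightarrow> nat \<Rightarrow> (nat \<Rightarrow> nat) set \<Rightarrow> (nat \<Rightarrow> nat) set
    \<Rightarrow> (nat \<times> nat \<Rightarrow> nat) set" where
  "tensor_code R m n C1 C2 =
     lspan R (grid m n) {(\<lambda>(i,j)\<in>grid m n. x i \<otimes>\<^bsub>R\<^esub> y j) | x y. x \<in> C1 \<and> y \<in> C2}"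

definition topology_code :: "nat ring \<Rightarrow> nat \<Rightarrow> nat \<Rightarrow> nat \<Rightarrow> nat \<Rightarrow> (nat \<times> nat \<Rightarrow> nat) set \<Rightarrow> bool" where
  "topology_code R m n a b C \<longleftrightarrow>
     (\<exists>C1 C2. linear_code R {1..m} C1 \<and> dim_ge R {1..m} C1 (m - a) \<and>
              linear_code R {1..n} C2 \<and> dim_ge R {1..n} C2 (n - b) \<and>
              C = tensor_code R m n C1 C2)"

definition corrects :: "'p set \<Rightarrow> ('p \<Rightarrow> nat) set \<Rightarrow> 'p set \<Rightarrow> bool" where
  "corrects P C E \<longleftrightarrow> (\<forall>x\<in>C. \<forall>y\<in>C. (\<forall>p \<in> P - E. x p = y p) \<longrightarrow> x = y)"

definition correctable :: "nat \<Rightarrow> nat \<Rightarrow> nat \<Rightarrow> nat \<Rightarrow> (nat \<times> nat) set \<Rightarrow> bool" where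
  "correctable m n a b E \<longleftrightarrow>
     (\<exists>R :: nat ring. field R \<and> finite (carrier R) \<and>
        (\<exists>C. topology_code R m n a b C \<and> corrects (grid m n) C E))"

definition regular :: "nat \<Rightarrow> nat \<Rightarrow> nat \<Rightarrow> nat \<Rightarrow> (nat \<times> nat) set \<Rightarrow> bool" where
  "regular m n a b E \<longleftrightarrow>
     (\<forall>U V. U \<subseteq> {1..m} \<and> V \<subseteq> {1..n} \<and> a \<le> card U \<and> b \<le> card V \<longrightarrow>
        int (card (E \<inter> (U \<times> V))) \<le> int (card V) * int a + int (card U) * int b - int a * int b)"

end

theory Submission
  imports Defs
begin

text \<open>Pad E to E' = E \<union> ([m+\<delta>] \<times> [n+\<gamma>] - [m] \<times> [n]), i.e. erase every new row and column.
  For U \<times> V with u0, u1 old and new rows and v0, v1 old and new columns (v = v0 + v1),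
  the new rows and columns carry at most u1 v + u0 v1 erasures, and the regularity bound of E
  on the old part leaves the slack (\<delta> - u1)(v - b - \<gamma>) + (\<gamma> - v1)(u0 - a) \<ge> 0; so E' is regular.
  Conversely, suppose C1' \<otimes> C2' corrects E'. If w \<in> C1' vanishes on [m] and y \<in> C2' is
  nonzero, then w \<otimes> y is supported on erased positions, hence is 0, so w = 0. Restriction to
  [m] is therefore injective on C1' and keeps its dimension \<ge> m - a; likewise for C2'. Every
  codeword of the restricted product code lifts to C1' \<otimes> C2', and every unerased position
  of E' lies in [m] \<times> [n] - E, so the restricted code corrects E.\<close>

lemma lspanI:
  assumes "finite T" "T \<subseteq> S" "c \<in> T \<rightarrow> carrier R"
    and "z = (\<lambda>p\<in>P. finsum R (\<lambda>v. c v \<otimes>\<^bsub>R\<^esub> v p) T)"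
  shows "z \<in> lspan R P S"
  using assms unfolding lspan_def by blast

lemma lspan_zero:
  fixes R :: "nat ring" (structure)
  assumes "ring R"
  shows "(\<lambda>p\<in>P. \<zero>\<^bsub>R\<^esub>) \<in> lspan R P S"
proof -
  interpret ring R by (rule assms)
  show ?thesis by (rule lspanI[of "{}" _ "\<lambda>_. \<one>"]) auto
qed

lemma lspan_superset:
  fixes R :: "nat ring" (structure)
  assumes "ring R" and "S \<subseteq> vecs R P"
  shows "S \<subseteq> lspan R P S"
proof
  interpret ring R by (rule assms(1))
  fix v assume v: "v \<in> S"
  then have v_vec: "v \<in> P \<rightarrow>\<^sub>E carrier R" using assms(2) unfolding vecs_def by blast
  show "v \<in> lspan R P S"
  proof (rule lspanI[of "{v}" _ "\<lambda>_. \<one>"])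
    show "v = (\<lambda>p\<in>P. finsum R (\<lambda>w. \<one> \<otimes> w p) {v})"
      using v_vec by (force simp: PiE_def extensional_def)
  qed (use v in auto)
qed

lemma linear_code_in_carrier:
  assumes "linear_code R P C" and "x \<in> C" and "p \<in> P"
  shows "x p \<in> carrier R"
  using assms unfolding linear_code_def vecs_def by blast

lemma linear_code_lincomb:
  assumes "linear_code R P C" and "finite T" "T \<subseteq> C" "c \<in> T \<rightarrow> carrier R"
  shows "(\<lambda>p\<in>P. finsum R (\<lambda>v. c v \<otimes>\<^bsub>R\<^esub> v p) T) \<in> C"
proof -
  have "(\<lambda>p\<in>P. finsum R (\<lambda>v. c v \<otimes>\<^bsub>R\<^esub> v p) T) \<in> lspan R P C"
    by (rule lspanI[OF assms(2-4) refl])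
  then show ?thesis using assms(1) unfolding linear_code_def by simp
qed

lemma linear_code_smult:
  fixes R :: "nat ring" (structure)
  assumes "ring R" and C: "linear_code R P C" and v: "v \<in> C" and r: "r \<in> carrier R"
  shows "(\<lambda>p\<in>P. r \<otimes>\<^bsub>R\<^esub> v p) \<in> C"
proof -
  interpret ring R by (rule assms(1))
  have "(\<lambda>p\<in>P. finsum R (\<lambda>w. r \<otimes> w p) {v}) \<in> C"
    using linear_code_lincomb[OF C, of "{v}" "\<lambda>_. r"] v r by simp
  moreover have "(\<lambda>p\<in>P. finsum R (\<lambda>w. r \<otimes> w p) {v}) = (\<lambda>p\<in>P. r \<otimes> v p)"
    using linear_code_in_carrier[OF C v] r by (intro restrict_ext) simp
  ultimately show ?thesis by simp
qed

lemma linear_code_add: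
  fixes R :: "nat ring" (structure)
  assumes "ring R" and C: "linear_code R P C" and u: "u \<in> C" and v: "v \<in> C"
  shows "(\<lambda>p\<in>P. u p \<oplus>\<^bsub>R\<^esub> v p) \<in> C"
proof -
  interpret ring R by (rule assms(1))
  note carr = linear_code_in_carrier[OF C]
  show ?thesis
  proof (cases "u = v")
    case True
    have "(\<lambda>p\<in>P. (\<one> \<oplus> \<one>) \<otimes> v p) \<in> C" by (rule linear_code_smult[OF assms(1) C v]) simp
    moreover have "(\<lambda>p\<in>P. (\<one> \<oplus> \<one>) \<otimes> v p) = (\<lambda>p\<in>P. u p \<oplus> v p)"
      using carr[OF v] True by (intro restrict_ext) (simp add: l_distr)
    ultimately show ?thesis by simp
  next
    case False
    have "(\<lambda>p\<in>P. finsum R (\<lambda>w. \<one> \<otimes> w p) {u, v}) \<in> C"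
      using linear_code_lincomb[OF C, of "{u, v}" "\<lambda>_. \<one>"] u v by simp
    moreover have "(\<lambda>p\<in>P. finsum R (\<lambda>w. \<one> \<otimes> w p) {u, v}) = (\<lambda>p\<in>P. u p \<oplus> v p)"
      using carr[OF u] carr[OF v] False by (intro restrict_ext) simp
    ultimately show ?thesis by simp
  qed
qed

text \<open>The family f may repeat vectors, so this is not an instance of the definition of
  lspan; it is proved from closure under addition and scaling.\<close>

lemma linear_code_finsum:
  fixes R :: "nat ring" (structure)
  assumes R: "ring R" and C: "linear_code R P C" and I: "finite I"
    and f: "f \<in> I \<rightarrow> C" and c: "c \<in> I \<rightarrow> carrier R"
  shows "(\<lambda>p\<in>P. finsum R (\<lambda>i. c i \<otimes>\<^bsub>R\<^esub> f i p) I) \<in> C"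
  using I f c
proof (induction I rule: finite_induct)
  case empty
  interpret ring R by (rule R)
  show ?case using lspan_zero[OF R, of P C] C unfolding linear_code_def by (simp add: restrict_def)
next
  case (insert i I)
  interpret ring R by (rule R)
  have head: "(\<lambda>p\<in>P. c i \<otimes> f i p) \<in> C"
    using linear_code_smult[OF R C] insert.prems by auto
  have tail: "(\<lambda>p\<in>P. finsum R (\<lambda>i. c i \<otimes> f i p) I) \<in> C"
    by (rule insert.IH) (use insert.prems in auto)
  have "(\<lambda>p\<in>P. (\<lambda>p\<in>P. c i \<otimes> f i p) p \<oplus> (\<lambda>p\<in>P. finsum R (\<lambda>i. c i \<otimes> f i p) I) p) \<in> C"
    by (rule linear_code_add[OF R C head tail])
  moreover have "(\<lambda>p\<in>P. (\<lambda>p\<in>P. c i \<otimes> f i p) p \<oplus> (\<lambda>p\<in>P. finsum R (\<lambda>i. c i \<otimes> f i p) I) p)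
      = (\<lambda>p\<in>P. finsum R (\<lambda>i. c i \<otimes> f i p) (insert i I))"
  proof (rule restrict_ext)
    fix p assume "p \<in> P"
    then have "\<And>j. j \<in> insert i I \<Longrightarrow> c j \<otimes> f j p \<in> carrier R"
      using insert.prems linear_code_in_carrier[OF C] by blast
    then show "(\<lambda>p\<in>P. c i \<otimes> f i p) p \<oplus> (\<lambda>p\<in>P. finsum R (\<lambda>i. c i \<otimes> f i p) I) p
        = finsum R (\<lambda>i. c i \<otimes> f i p) (insert i I)"
      using \<open>p \<in> P\<close> insert.hyps by (simp add: Pi_def)
  qed
  ultimately show ?case by (simp only: restrict_def)
qed

lemma lspan_restrict_subset:
  fixes R :: "nat ring" (structure)
  assumes R: "ring R" and QP: "Q \<subseteq> P" and S: "S \<subseteq> vecs R P"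
  shows "lspan R Q ((\<lambda>w. restrict w Q) ` S) \<subseteq> (\<lambda>w. restrict w Q) ` lspan R P S"
proof
  interpret ring R by (rule R)
  fix z assume "z \<in> lspan R Q ((\<lambda>w. restrict w Q) ` S)"
  then obtain T c where z: "z = (\<lambda>q\<in>Q. finsum R (\<lambda>t. c t \<otimes> t q) T)"
    and T: "finite T" "T \<subseteq> (\<lambda>w. restrict w Q) ` S" and c: "c \<in> T \<rightarrow> carrier R"
    unfolding lspan_def by blast
  have S_carr: "w p \<in> carrier R" if "w \<in> S" "p \<in> P" for w p
    using that S unfolding vecs_def by blast
  define g where "g t = (SOME w. w \<in> S \<and> restrict w Q = t)" for t
  have g: "g t \<in> S \<and> restrict (g t) Q = t" if "t \<in> T" for t
    using someI_ex[of "\<lambda>w. w \<in> S \<and> restrict w Q = t"] that T(2) unfolding g_def by blast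
  have inj: "inj_on g T" by (metis g inj_onI)
  define z' where "z' = (\<lambda>p\<in>P. finsum R (\<lambda>w. c (restrict w Q) \<otimes> w p) (g ` T))"
  have "z' \<in> lspan R P S"
    by (rule lspanI[of "g ` T" _ "\<lambda>w. c (restrict w Q)"]) (use T g c in \<open>auto simp: z'_def\<close>)
  moreover have "restrict z' Q = z"
  proof (unfold z, rule restrict_ext)
    fix q assume q: "q \<in> Q"
    then have gq: "g t q = t q" if "t \<in> T" for t
      using g[OF that] by (metis restrict_apply')
    have lifted_carr: "c t \<otimes> g t q \<in> carrier R" if "t \<in> T" for t
      using g[OF that] c that S_carr q QP by blast
    have "z' q = finsum R (\<lambda>w. c (restrict w Q) \<otimes> w q) (g ` T)"
      using q QP by (auto simp: z'_def)
    also have "\<dots> = finsum R (\<lambda>t. c (restrict (g t) Q) \<otimes> g t q) T"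
      by (rule finsum_reindex[OF _ inj]) (use g lifted_carr in auto)
    also have "\<dots> = finsum R (\<lambda>t. c t \<otimes> t q) T"
      by (rule finsum_cong') (use g lifted_carr gq in auto)
    finally show "z' q = finsum R (\<lambda>t. c t \<otimes> t q) T" .
  qed
  ultimately show "z \<in> (\<lambda>w. restrict w Q) ` lspan R P S" by blast
qed

lemma linear_code_restrict:
  fixes R :: "nat ring" (structure)
  assumes R: "ring R" and C: "linear_code R P C" and QP: "Q \<subseteq> P"
  shows "linear_code R Q ((\<lambda>x. restrict x Q) ` C)"
proof -
  have C_vecs: "C \<subseteq> vecs R P" using C unfolding linear_code_def by blast
  have vecs: "(\<lambda>x. restrict x Q) ` C \<subseteq> vecs R Q"
    using linear_code_in_carrier[OF C] QP unfolding vecs_def by auto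
  have "lspan R Q ((\<lambda>x. restrict x Q) ` C) \<subseteq> (\<lambda>x. restrict x Q) ` C"
    using lspan_restrict_subset[OF R QP C_vecs] C unfolding linear_code_def by simp
  with lspan_superset[OF R vecs] vecs show ?thesis unfolding linear_code_def by blast
qed

lemma dim_ge_restrict:
  fixes R :: "nat ring" (structure)
  assumes R: "ring R" and C: "linear_code R P C" and QP: "Q \<subseteq> P" and D: "dim_ge R P C k"
    and ker: "\<And>w. w \<in> C \<Longrightarrow> \<forall>q\<in>Q. w q = \<zero> \<Longrightarrow> \<forall>p\<in>P. w p = \<zero>"
  shows "dim_ge R Q ((\<lambda>x. restrict x Q) ` C) k"
proof -
  interpret ring R by (rule R)
  obtain vs where vs: "\<forall>i<k. vs i \<in> C" and indep: "lin_indep R P vs k"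
    using D unfolding dim_ge_def by blast
  have "lin_indep R Q (\<lambda>i. restrict (vs i) Q) k"
    unfolding lin_indep_def
  proof (intro ballI impI)
    fix c assume c: "c \<in> {..<k} \<rightarrow> carrier R"
      and zero: "\<forall>q\<in>Q. (\<Oplus>i\<in>{..<k}. c i \<otimes> restrict (vs i) Q q) = \<zero>"
    define w where "w = (\<lambda>p\<in>P. finsum R (\<lambda>i. c i \<otimes> vs i p) {..<k})"
    have "w \<in> C" unfolding w_def by (rule linear_code_finsum[OF R C]) (use vs c in auto)
    moreover have "\<forall>q\<in>Q. w q = \<zero>" using zero QP by (auto simp: w_def)
    ultimately have "\<forall>p\<in>P. w p = \<zero>" by (rule ker)
    then have "\<forall>p\<in>P. (\<Oplus>i\<in>{..<k}. c i \<otimes> vs i p) = \<zero>" by (simp add: w_def)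
    then show "\<forall>i<k. c i = \<zero>" using indep c unfolding lin_indep_def by blast
  qed
  then show ?thesis
    unfolding dim_ge_def by (intro exI[of _ "\<lambda>i. restrict (vs i) Q"]) (use vs in auto)
qed

lemma dim_ge_imp_nonzero:
  fixes R :: "nat ring" (structure)
  assumes R: "domain R" and C: "linear_code R P C" and D: "dim_ge R P C k" and k: "0 < k"
  shows "\<exists>y\<in>C. \<exists>p\<in>P. y p \<noteq> \<zero>"
proof (rule ccontr)
  assume all_zero: "\<not> ?thesis"
  interpret domain R by (rule R)
  obtain vs where vs: "\<forall>i<k. vs i \<in> C" and indep: "lin_indep R P vs k"
    using D unfolding dim_ge_def by blast
  define c where "c i = (if i = 0 then \<one> else \<zero>)" for i :: nat
  have c: "c \<in> {..<k} \<rightarrow> carrier R" by (auto simp: c_def)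
  have vs_zero: "vs i p = \<zero>" if "i < k" "p \<in> P" for i p
    using all_zero vs that by blast
  have "(\<Oplus>i\<in>{..<k}. c i \<otimes> vs i p) = (\<Oplus>i\<in>{..<k}. \<zero>)" if "p \<in> P" for p
    using vs_zero c that by (intro finsum_cong') (auto simp: Pi_iff)
  then have "\<forall>p\<in>P. (\<Oplus>i\<in>{..<k}. c i \<otimes> vs i p) = \<zero>" by simp
  then have "c 0 = \<zero>" using indep c k unfolding lin_indep_def by simp
  then show False by (simp add: c_def)
qed

definition outer_prod :: "nat ring \<Rightarrow> nat \<Rightarrow> nat \<Rightarrow> (nat \<Rightarrow> nat) \<Rightarrow> (nat \<Rightarrow> nat) \<Rightarrow> (nat \<times> nat \<Rightarrow> nat)"
  where "outer_prod R m n x y = (\<lambda>(i, j)\<in>grid m n. x i \<otimes>\<^bsub>R\<^esub> y j)"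

lemma tensor_code_outer_prod:
  "tensor_code R m n C1 C2 = lspan R (grid m n) {outer_prod R m n x y | x y. x \<in> C1 \<and> y \<in> C2}"
  unfolding tensor_code_def outer_prod_def ..

lemma outer_prod_in_vecs:
  fixes R :: "nat ring" (structure)
  assumes R: "ring R" and C1: "linear_code R {1..m} C1" and C2: "linear_code R {1..n} C2"
    and "x \<in> C1" "y \<in> C2"
  shows "outer_prod R m n x y \<in> vecs R (grid m n)"
proof -
  interpret ring R by (rule R)
  show ?thesis
    using linear_code_in_carrier[OF C1 \<open>x \<in> C1\<close>] linear_code_in_carrier[OF C2 \<open>y \<in> C2\<close>]
    unfolding vecs_def outer_prod_def restrict_PiE_iff grid_def by auto
qed

lemma outer_prod_in_tensor_code:
  fixes R :: "nat ring" (structure)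
  assumes R: "ring R" and C1: "linear_code R {1..m} C1" and C2: "linear_code R {1..n} C2"
    and "x \<in> C1" "y \<in> C2"
  shows "outer_prod R m n x y \<in> tensor_code R m n C1 C2"
proof -
  interpret ring R by (rule R)
  have "{outer_prod R m n x y | x y. x \<in> C1 \<and> y \<in> C2} \<subseteq> vecs R (grid m n)"
    using outer_prod_in_vecs[OF R C1 C2] by blast
  from lspan_superset[OF R this] show ?thesis
    using assms(4,5) unfolding tensor_code_outer_prod by blast
qed

lemma restrict_outer_prod:
  assumes "m \<le> M" "n \<le> N"
  shows "restrict (outer_prod R M N x y) (grid m n)
    = outer_prod R m n (restrict x {1..m}) (restrict y {1..n})"
  using assms by (intro ext) (auto simp: outer_prod_def grid_def)

lemma tensor_code_restrict_subset:
  fixes R :: "nat ring" (structure)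
  assumes R: "ring R" and C1: "linear_code R {1..M} C1" and C2: "linear_code R {1..N} C2"
    and mn: "m \<le> M" "n \<le> N"
  shows "tensor_code R m n ((\<lambda>x. restrict x {1..m}) ` C1) ((\<lambda>y. restrict y {1..n}) ` C2)
    \<subseteq> (\<lambda>w. restrict w (grid m n)) ` tensor_code R M N C1 C2"
proof -
  interpret ring R by (rule R)
  let ?O = "{outer_prod R M N x y | x y. x \<in> C1 \<and> y \<in> C2}"
  have vecs: "?O \<subseteq> vecs R (grid M N)" using outer_prod_in_vecs[OF R C1 C2] by blast
  have sub: "grid m n \<subseteq> grid M N" using mn by (auto simp: grid_def)
  have "(\<lambda>w. restrict w (grid m n)) ` ?O
      = {restrict (outer_prod R M N x y) (grid m n) | x y. x \<in> C1 \<and> y \<in> C2}"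
    by blast
  also have "\<dots> = {outer_prod R m n (restrict x {1..m}) (restrict y {1..n}) | x y. x \<in> C1 \<and> y \<in> C2}"
    by (simp only: restrict_outer_prod[OF mn])
  also have "\<dots> = {outer_prod R m n x y | x y. x \<in> (\<lambda>x. restrict x {1..m}) ` C1
      \<and> y \<in> (\<lambda>y. restrict y {1..n}) ` C2}"
    by blast
  finally show ?thesis
    unfolding tensor_code_outer_prod by (metis lspan_restrict_subset[OF R sub vecs])
qed

lemma corrects_restrict:
  assumes "corrects P C' E'" and "C \<subseteq> (\<lambda>w. restrict w Q) ` C'" and "P - E' \<subseteq> Q - E"
  shows "corrects Q C E"
  unfolding corrects_def
proof (intro ballI impI)
  fix x y assume "x \<in> C" "y \<in> C" and agree: "\<forall>p\<in>Q - E. x p = y p"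
  then obtain x' y' where "x' \<in> C'" "y' \<in> C'" and x: "x = restrict x' Q" and y: "y = restrict y' Q"
    using assms(2) by blast
  moreover have "\<forall>p\<in>P - E'. x' p = y' p"
    using agree assms(3) unfolding x y by auto
  ultimately have "x' = y'" using assms(1) unfolding corrects_def by blast
  then show "x = y" unfolding x y by simp
qed

lemma corrects_outer_prod_zero:
  fixes R :: "nat ring" (structure)
  assumes R: "domain R" and C1: "linear_code R {1..M} C1" and C2: "linear_code R {1..N} C2"
    and cor: "corrects (grid M N) (tensor_code R M N C1 C2) E"
    and x: "x \<in> C1" and y: "y \<in> C2"
    and vanish: "\<forall>p\<in>grid M N - E. outer_prod R M N x y p = \<zero>"
    and i: "i \<in> {1..M}" and j: "j \<in> {1..N}"
  shows "x i = \<zero> \<or> y j = \<zero>"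
proof -
  interpret domain R by (rule R)
  have zero: "(\<lambda>p\<in>grid M N. \<zero>) \<in> tensor_code R M N C1 C2"
    unfolding tensor_code_def by (rule lspan_zero[OF ring_axioms])
  have "outer_prod R M N x y = (\<lambda>p\<in>grid M N. \<zero>)"
    using cor[unfolded corrects_def, rule_format, OF outer_prod_in_tensor_code[OF ring_axioms C1 C2 x y] zero]
      vanish by simp
  moreover have "(i, j) \<in> grid M N" using i j by (simp add: grid_def)
  ultimately have "x i \<otimes> y j = \<zero>"
    by (simp add: outer_prod_def fun_eq_iff split: if_splits)
  then show ?thesis
    using integral_iff linear_code_in_carrier[OF C1 x i] linear_code_in_carrier[OF C2 y j] by blast
qed

lemma padded_kernel_rows:
  fixes R :: "nat ring" (structure)
  assumes R: "domain R" and C1: "linear_code R {1..M} C1" and C2: "linear_code R {1..N} C2"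
    and cor: "corrects (grid M N) (tensor_code R M N C1 C2) (E \<union> (grid M N - grid m n))"
    and y: "y \<in> C2" "j \<in> {1..N}" "y j \<noteq> \<zero>"
    and w: "w \<in> C1" "\<forall>i\<in>{1..m}. w i = \<zero>"
  shows "\<forall>i\<in>{1..M}. w i = \<zero>"
proof
  interpret domain R by (rule R)
  fix i assume "i \<in> {1..M}"
  moreover have "\<forall>p\<in>grid M N - (E \<union> (grid M N - grid m n)). outer_prod R M N w y p = \<zero>"
    using w linear_code_in_carrier[OF C2 y(1)] by (auto simp: outer_prod_def grid_def)
  ultimately show "w i = \<zero>" using corrects_outer_prod_zero[OF R C1 C2 cor w(1) y(1)] y by blast
qed

lemma padded_kernel_cols:
  fixes R :: "nat ring" (structure)
  assumes R: "domain R" and C1: "linear_code R {1..M} C1" and C2: "linear_code R {1..N} C2"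
    and cor: "corrects (grid M N) (tensor_code R M N C1 C2) (E \<union> (grid M N - grid m n))"
    and x: "x \<in> C1" "i \<in> {1..M}" "x i \<noteq> \<zero>"
    and w: "w \<in> C2" "\<forall>j\<in>{1..n}. w j = \<zero>"
  shows "\<forall>j\<in>{1..N}. w j = \<zero>"
proof
  interpret domain R by (rule R)
  fix j assume "j \<in> {1..N}"
  moreover have "\<forall>p\<in>grid M N - (E \<union> (grid M N - grid m n)). outer_prod R M N x w p = \<zero>"
    using w linear_code_in_carrier[OF C1 x(1)] by (auto simp: outer_prod_def grid_def)
  ultimately show "w j = \<zero>" using corrects_outer_prod_zero[OF R C1 C2 cor x(1) w(1)] x by blast
qed

lemma padded_bound_arith:
  fixes e u0 u1 v0 v1 a b d g :: int
  assumes e: "e \<le> v0 * a + u0 * b - a * b"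
    and "0 \<le> u1" "u1 \<le> d" "0 \<le> v1" "v1 \<le> g" "a + d \<le> u0 + u1" "b + g \<le> v0 + v1"
  shows "e + u1 * (v0 + v1) + u0 * v1
    \<le> (v0 + v1) * (a + d) + (u0 + u1) * (b + g) - (a + d) * (b + g)"
proof -
  have "(v0 + v1) * (a + d) + (u0 + u1) * (b + g) - (a + d) * (b + g)
      - (v0 * a + u0 * b - a * b + u1 * (v0 + v1) + u0 * v1)
      = (d - u1) * (v0 + v1 - b - g) + (g - v1) * (u0 - a)"
    by (simp add: algebra_simps)
  moreover have "0 \<le> (d - u1) * (v0 + v1 - b - g)" "0 \<le> (g - v1) * (u0 - a)"
    using assms by simp_all
  ultimately show ?thesis using e by linarith
qed

lemma regular_pad:
  assumes E: "E \<subseteq> grid m n" and reg: "regular m n a b E"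
  shows "regular (m + d) (n + g) (a + d) (b + g) (E \<union> (grid (m + d) (n + g) - grid m n))"
  unfolding regular_def
proof (intro allI impI, elim conjE)
  fix U V
  assume U: "U \<subseteq> {1..m + d}" and V: "V \<subseteq> {1..n + g}"
    and cU: "a + d \<le> card U" and cV: "b + g \<le> card V"
  define U0 U1 V0 V1 where "U0 = U \<inter> {1..m}" and "U1 = U - {1..m}"
    and "V0 = V \<inter> {1..n}" and "V1 = V - {1..n}"
  note parts = U0_def U1_def V0_def V1_def
  have fin: "finite U" "finite V" using U V finite_subset by blast+
  have split: "card U = card U0 + card U1" "card V = card V0 + card V1"
    unfolding parts using fin by (simp_all add: card_Int_Diff)
  have "card U1 \<le> card {m + 1..m + d}" using U by (intro card_mono) (auto simp: parts)
  moreover have "card V1 \<le> card {n + 1..n + g}" using V by (intro card_mono) (auto simp: parts)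
  ultimately have small: "card U1 \<le> d" "card V1 \<le> g" by simp_all
  have "(E \<union> (grid (m + d) (n + g) - grid m n)) \<inter> (U \<times> V)
      \<subseteq> (E \<inter> (U0 \<times> V0)) \<union> (U1 \<times> V) \<union> (U0 \<times> V1)"
    using E U V unfolding parts grid_def by auto
  then have "card ((E \<union> (grid (m + d) (n + g) - grid m n)) \<inter> (U \<times> V))
      \<le> card ((E \<inter> (U0 \<times> V0)) \<union> (U1 \<times> V) \<union> (U0 \<times> V1))"
    using fin by (intro card_mono) (auto simp: parts)
  also have "\<dots> \<le> card (E \<inter> (U0 \<times> V0)) + card (U1 \<times> V) + card (U0 \<times> V1)"
    by (meson add_le_mono card_Un_le le_refl order_trans)
  finally have "card ((E \<union> (grid (m + d) (n + g) - grid m n)) \<inter> (U \<times> V))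
      \<le> card (E \<inter> (U0 \<times> V0)) + card U1 * card V + card U0 * card V1"
    by (simp add: card_cartesian_product)
  then have inter_bound: "int (card ((E \<union> (grid (m + d) (n + g) - grid m n)) \<inter> (U \<times> V)))
      \<le> int (card (E \<inter> (U0 \<times> V0))) + int (card U1) * int (card V) + int (card U0) * int (card V1)"
    by (metis of_nat_add of_nat_le_iff of_nat_mult)
  have "int (card (E \<inter> (U0 \<times> V0)))
      \<le> int (card V0) * int a + int (card U0) * int b - int a * int b"
    using reg cU cV split small unfolding regular_def parts by auto
  then have "int (card (E \<inter> (U0 \<times> V0))) + int (card U1) * (int (card V0) + int (card V1))
        + int (card U0) * int (card V1)
      \<le> (int (card V0) + int (card V1)) * (int a + int d)
        + (int (card U0) + int (card U1)) * (int b + int g) - (int a + int d) * (int b + int g)"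
    by (rule padded_bound_arith) (use cU cV split small in simp_all)
  with inter_bound show "int (card ((E \<union> (grid (m + d) (n + g) - grid m n)) \<inter> (U \<times> V)))
      \<le> int (card V) * int (a + d) + int (card U) * int (b + g) - int (a + d) * int (b + g)"
    unfolding split by simp
qed

lemma correctable_of_padded:
  assumes am: "a < m" and bn: "b < n"
    and "correctable (m + d) (n + g) (a + d) (b + g) (E \<union> (grid (m + d) (n + g) - grid m n))"
  shows "correctable m n a b E"
proof -
  let ?M = "m + d" and ?N = "n + g" and ?E' = "E \<union> (grid (m + d) (n + g) - grid m n)"
  obtain R :: "nat ring" and C1' C2' where F: "field R" and fin: "finite (carrier R)"
    and C1': "linear_code R {1..?M} C1'" "dim_ge R {1..?M} C1' (m - a)"
    and C2': "linear_code R {1..?N} C2'" "dim_ge R {1..?N} C2' (n - b)"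
    and cor: "corrects (grid ?M ?N) (tensor_code R ?M ?N C1' C2') ?E'"
    using assms(3) unfolding correctable_def topology_code_def by auto
  interpret field R by (rule F)
  obtain x0 i0 where x0: "x0 \<in> C1'" "i0 \<in> {1..?M}" "x0 i0 \<noteq> \<zero>\<^bsub>R\<^esub>"
    using dim_ge_imp_nonzero[OF domain_axioms C1'] am by auto
  obtain y0 j0 where y0: "y0 \<in> C2'" "j0 \<in> {1..?N}" "y0 j0 \<noteq> \<zero>\<^bsub>R\<^esub>"
    using dim_ge_imp_nonzero[OF domain_axioms C2'] bn by auto
  define C1 C2 where "C1 = (\<lambda>x. restrict x {1..m}) ` C1'" and "C2 = (\<lambda>y. restrict y {1..n}) ` C2'"
  have codes: "linear_code R {1..m} C1" "linear_code R {1..n} C2"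
    unfolding C1_def C2_def
    by (rule linear_code_restrict[OF ring_axioms C1'(1)], force)
      (rule linear_code_restrict[OF ring_axioms C2'(1)], force)
  have dims: "dim_ge R {1..m} C1 (m - a)" "dim_ge R {1..n} C2 (n - b)"
    unfolding C1_def C2_def
    by (rule dim_ge_restrict[OF ring_axioms C1'(1) _ C1'(2)], force,
        use padded_kernel_rows[OF domain_axioms C1'(1) C2'(1) cor y0] in blast)
      (rule dim_ge_restrict[OF ring_axioms C2'(1) _ C2'(2)], force,
        use padded_kernel_cols[OF domain_axioms C1'(1) C2'(1) cor x0] in blast)
  have "corrects (grid m n) (tensor_code R m n C1 C2) E"
  proof (rule corrects_restrict[OF cor])
    show "tensor_code R m n C1 C2 \<subseteq> (\<lambda>w. restrict w (grid m n)) ` tensor_code R ?M ?N C1' C2'"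
      unfolding C1_def C2_def by (rule tensor_code_restrict_subset[OF ring_axioms C1'(1) C2'(1)]) simp_all
  qed (auto simp: grid_def)
  then show ?thesis
    using F fin codes dims unfolding correctable_def topology_code_def by auto
qed

theorem lemma7:
  fixes m n a b :: nat
  assumes "a < m" and "b < n"
    and "\<exists>E. E \<subseteq> grid m n \<and> regular m n a b E \<and> \<not> correctable m n a b E"
  shows "\<forall>\<delta> \<gamma> :: nat. \<exists>E'. E' \<subseteq> grid (m + \<delta>) (n + \<gamma>) \<and>
            regular (m + \<delta>) (n + \<gamma>) (a + \<delta>) (b + \<gamma>) E' \<and>
            \<not> correctable (m + \<delta>) (n + \<gamma>) (a + \<delta>) (b + \<gamma>) E'"
proof (intro allI)
  fix \<delta> \<gamma> :: nat
  obtain E where E: "E \<subseteq> grid m n" "regular m n a b E" "\<not> correctable m n a b E"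
    using assms(3) by blast
  let ?E' = "E \<union> (grid (m + \<delta>) (n + \<gamma>) - grid m n)"
  have "?E' \<subseteq> grid (m + \<delta>) (n + \<gamma>)" using E(1) by (auto simp: grid_def)
  moreover have "regular (m + \<delta>) (n + \<gamma>) (a + \<delta>) (b + \<gamma>) ?E'"
    by (rule regular_pad[OF E(1,2)])
  moreover have "\<not> correctable (m + \<delta>) (n + \<gamma>) (a + \<delta>) (b + \<gamma>) ?E'"
    using correctable_of_padded[OF assms(1,2)] E(3) by blast
  ultimately show "\<exists>E'. E' \<subseteq> grid (m + \<delta>) (n + \<gamma>) \<and>
      regular (m + \<delta>) (n + \<gamma>) (a + \<delta>) (b + \<gamma>) E' \<and>
      \<not> correctable (m + \<delta>) (n + \<gamma>) (a + \<delta>) (b + \<gamma>) E'"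
    by blast
qed

end
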